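(* For every constant $c>0$ there is a function $\varepsilon(n)\to 0$ as $n\to\infty$ such that \[ \Pr\left[\Gamma(G(n,c/n)) \leq \left(\tfrac12+\varepsilon(n)\right)\frac{\ln n}{\ln\ln n}\right]\to 1 \quad\text{as } n\to\infty . \]
   Context: $G(n,p)$ denotes the Erdős–Rényi random graph on vertex set $\{1,\dots,n\}$ in which each pair of vertices is joined independently with probability $p$. The Grundy number $\Gamma(G)$ is the largest number of colors used by the first-fit coloring algorithm (which colors vertices in a given order, each with the smallest positive integer not used on its previously colored neighbors) over all vertex orderings. *)

theory Defs
  imports Complex_Main
begin

text \<open>Vertex set of G(n,p) is {1..n}; a graph is a set of edges, each edge a 2-element set.\<close>

definition all_pairs :: "nat \<Rightarrow> nat set set" where
  "all_pairs n = {e. \<exists>u v. e = {u, v} \<and> u \<noteq> v \<and> u \<in> {1..n} \<and> v \<in> {1..n}}"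

definition prob_Gnp :: "nat \<Rightarrow> real \<Rightarrow> (nat set set \<Rightarrow> bool) \<Rightarrow> real" where
  "prob_Gnp n p P =
     (\<Sum>E\<in>Pow (all_pairs n). if P E
        then p ^ card E * (1 - p) ^ (card (all_pairs n) - card E) else 0)"

text \<open>First-fit colouring: colour 0 means "not yet coloured"; colours are positive.
  A vertex v receives the least positive colour not used by an already coloured neighbour.\<close>
definition ff_step :: "nat set set \<Rightarrow> nat \<Rightarrow> (nat \<Rightarrow> nat) \<Rightarrow> (nat \<Rightarrow> nat)" where
  "ff_step E v col =
     col(v := (LEAST k::nat. 1 \<le> k \<and> (\<forall>u. {u, v} \<in> E \<and> col u \<noteq> 0 \<longrightarrow> col u \<noteq> k)))"

definition ff_coloring :: "nat set set \<Rightarrow> nat list \<Rightarrow> (nat \<Rightarrow> nat)" where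
  "ff_coloring E xs = fold (ff_step E) xs (\<lambda>_. 0)"

definition grundy :: "nat \<Rightarrow> nat set set \<Rightarrow> nat" where
  "grundy n E = Max {card (ff_coloring E xs ` set xs) | xs. distinct xs \<and> set xs = {1..n}}"

end

theory Submission
  imports Defs "HOL-Real_Asymp.Real_Asymp"
begin

text \<open>If first-fit uses at least d + 3 colours, some vertex v gets a colour m \<ge> d + 2 and has
  a neighbour u of colour m - 1, and each of u, v has neighbours of every colour 1, ..., d.
  So the graph contains a double star: the edge uv, d further edges at u and d at v.
  A union bound over the at most n^2 (n choose d)^2 placements of its 2d + 1 edges bounds
  the probability of this in G(n, c/n) by n c (c e / d)^(2d), which tends to 0 for
  d = (1/2 + \<delta>) ln n / ln ln n with \<delta> = (ln ln n)^(-1/2).\<close>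

lemma sum_Pow_power_card:
  fixes p q :: "'a :: comm_semiring_1"
  assumes "finite T"
  shows "(\<Sum>E\<in>Pow T. p ^ card E * q ^ (card T - card E)) = (p + q) ^ card T"
proof -
  have "(p + q) ^ card T = (\<Sum>X\<in>Pow T. (\<Prod>x\<in>X. p) * (\<Prod>x\<in>T - X. q))"
    using prod_add[OF assms, of "\<lambda>_. p" "\<lambda>_. q"] by simp
  also have "\<dots> = (\<Sum>E\<in>Pow T. p ^ card E * q ^ (card T - card E))"
    using assms by (intro sum.cong) (auto simp: card_Diff_subset finite_subset)
  finally show ?thesis ..
qed

lemma finite_all_pairs: "finite (all_pairs n)"
proof (rule finite_subset)
  show "all_pairs n \<subseteq> Pow {1..n}"
    unfolding all_pairs_def by auto
qed simp

lemma doubleton_in_all_pairs_iff: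
  "{x, y} \<in> all_pairs n \<longleftrightarrow> x \<noteq> y \<and> x \<in> {1..n} \<and> y \<in> {1..n}"
  unfolding all_pairs_def by (auto simp: doubleton_eq_iff)

definition Gnp_weight :: "nat \<Rightarrow> real \<Rightarrow> nat set set \<Rightarrow> real" where
  "Gnp_weight n p E = p ^ card E * (1 - p) ^ (card (all_pairs n) - card E)"

lemma prob_Gnp_eq:
  "prob_Gnp n p P = (\<Sum>E\<in>Pow (all_pairs n). if P E then Gnp_weight n p E else 0)"
  unfolding prob_Gnp_def Gnp_weight_def ..

lemma Gnp_weight_nonneg: "0 \<le> p \<Longrightarrow> p \<le> 1 \<Longrightarrow> 0 \<le> Gnp_weight n p E"
  unfolding Gnp_weight_def by simp

lemma sum_Gnp_weight: "(\<Sum>E\<in>Pow (all_pairs n). Gnp_weight n p E) = 1"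
  unfolding Gnp_weight_def using sum_Pow_power_card[OF finite_all_pairs, of p "1 - p" n] by simp

lemma prob_Gnp_compl: "prob_Gnp n p (\<lambda>E. \<not> P E) = 1 - prob_Gnp n p P"
proof -
  have "prob_Gnp n p (\<lambda>E. \<not> P E) + prob_Gnp n p P = (\<Sum>E\<in>Pow (all_pairs n). Gnp_weight n p E)"
    unfolding prob_Gnp_eq sum.distrib[symmetric] by (intro sum.cong) auto
  then show ?thesis
    using sum_Gnp_weight[of n p] by linarith
qed

lemma prob_Gnp_nonneg: "0 \<le> p \<Longrightarrow> p \<le> 1 \<Longrightarrow> 0 \<le> prob_Gnp n p P"
  unfolding prob_Gnp_eq by (intro sum_nonneg) (simp add: Gnp_weight_nonneg)

lemma prob_Gnp_le_1: "0 \<le> p \<Longrightarrow> p \<le> 1 \<Longrightarrow> prob_Gnp n p P \<le> 1"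
  using prob_Gnp_compl[of n p P] prob_Gnp_nonneg[of p n "\<lambda>E. \<not> P E"] by linarith

lemma prob_Gnp_mono:
  assumes "0 \<le> p" "p \<le> 1" "\<And>E. E \<subseteq> all_pairs n \<Longrightarrow> P E \<Longrightarrow> Q E"
  shows "prob_Gnp n p P \<le> prob_Gnp n p Q"
  unfolding prob_Gnp_eq using assms by (intro sum_mono) (auto simp: Gnp_weight_nonneg)

lemma prob_Gnp_union_bound:
  assumes "0 \<le> p" "p \<le> 1" "finite I"
  shows "prob_Gnp n p (\<lambda>E. \<exists>i\<in>I. P i E) \<le> (\<Sum>i\<in>I. prob_Gnp n p (P i))"
proof -
  let ?w = "Gnp_weight n p"
  have "prob_Gnp n p (\<lambda>E. \<exists>i\<in>I. P i E)
      \<le> (\<Sum>E\<in>Pow (all_pairs n). \<Sum>i\<in>I. if P i E then ?w E else 0)"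
    unfolding prob_Gnp_eq
  proof (rule sum_mono)
    fix E
    have w: "0 \<le> ?w E"
      using assms(1,2) by (rule Gnp_weight_nonneg)
    show "(if \<exists>i\<in>I. P i E then ?w E else 0) \<le> (\<Sum>i\<in>I. if P i E then ?w E else 0)"
    proof (cases "\<exists>i\<in>I. P i E")
      case True
      then obtain i where "i \<in> I" "P i E" by blast
      then have "?w E \<le> (\<Sum>i\<in>I. if P i E then ?w E else 0)"
        using member_le_sum[of i I "\<lambda>i. if P i E then ?w E else 0"] assms(3) w by simp
      with True show ?thesis by simp
    qed (simp add: w sum_nonneg)
  qed
  also have "\<dots> = (\<Sum>i\<in>I. prob_Gnp n p (P i))"
    unfolding prob_Gnp_eq by (rule sum.swap)
  finally show ?thesis .
qed

lemma prob_Gnp_superset: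
  assumes "F \<subseteq> all_pairs n"
  shows "prob_Gnp n p (\<lambda>E. F \<subseteq> E) = p ^ card F"
proof -
  define S where "S = all_pairs n"
  have S: "finite S" "F \<subseteq> S"
    using assms finite_all_pairs unfolding S_def by auto
  then have F: "finite F"
    by (rule finite_subset[rotated])
  have weight: "Gnp_weight n p (E \<union> F) = p ^ card F * (p ^ card E * (1 - p) ^ (card (S - F) - card E))"
    if "E \<subseteq> S - F" for E
  proof -
    have "finite E" "E \<inter> F = {}" "card E \<le> card (S - F)"
      using that S by (auto intro: finite_subset card_mono)
    moreover have "card (S - F) = card S - card F"
      using S F by (simp add: card_Diff_subset)
    ultimately show ?thesis
      unfolding Gnp_weight_def S_def[symmetric] using F S
      by (simp add: card_Un_disjoint power_add add.commute)
  qed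
  have "prob_Gnp n p (\<lambda>E. F \<subseteq> E) = (\<Sum>E\<in>{E \<in> Pow S. F \<subseteq> E}. Gnp_weight n p E)"
    unfolding prob_Gnp_eq S_def[symmetric] by (rule sum.inter_filter[symmetric]) (simp add: S)
  also have "{E \<in> Pow S. F \<subseteq> E} = (\<lambda>E. E \<union> F) ` Pow (S - F)"
    using S by (auto intro!: image_eqI[where x = "_ - F"])
  also have "(\<Sum>E\<in>(\<lambda>E. E \<union> F) ` Pow (S - F). Gnp_weight n p E)
      = (\<Sum>E\<in>Pow (S - F). Gnp_weight n p (E \<union> F))"
    by (rule sum.reindex_cong[where l = "\<lambda>E. E \<union> F"]) (auto simp: inj_on_def)
  also have "\<dots> = p ^ card F * (p + (1 - p)) ^ card (S - F)"
    using S by (simp add: weight sum_distrib_left[symmetric] sum_Pow_power_card)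
  finally show ?thesis by simp
qed

definition colours_witnessed :: "nat set set \<Rightarrow> (nat \<Rightarrow> nat) \<Rightarrow> bool" where
  "colours_witnessed E col \<longleftrightarrow> (\<forall>w j. 1 \<le> j \<and> j < col w \<longrightarrow> (\<exists>u. {u, w} \<in> E \<and> col u = j))"

lemma colours_witnessed_ff_step:
  assumes witnessed: "colours_witnessed E col" and uncoloured: "col v = 0"
  shows "colours_witnessed E (ff_step E v col)"
  unfolding colours_witnessed_def
proof (intro allI impI)
  fix w j
  define m where "m = (LEAST k::nat. 1 \<le> k \<and> (\<forall>u. {u, v} \<in> E \<and> col u \<noteq> 0 \<longrightarrow> col u \<noteq> k))"
  have step: "ff_step E v col = col(v := m)"
    unfolding ff_step_def m_def ..
  assume j: "1 \<le> j \<and> j < ff_step E v col w"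
  show "\<exists>u. {u, w} \<in> E \<and> ff_step E v col u = j"
  proof (cases "w = v")
    case True
    with j step have "j < m" by simp
    then have "\<not> (1 \<le> j \<and> (\<forall>u. {u, v} \<in> E \<and> col u \<noteq> 0 \<longrightarrow> col u \<noteq> j))"
      unfolding m_def by (rule not_less_Least)
    with j obtain u where "{u, v} \<in> E" "col u \<noteq> 0" "col u = j"
      by blast
    moreover from \<open>col u \<noteq> 0\<close> uncoloured have "u \<noteq> v"
      by auto
    ultimately show ?thesis
      using True step by auto
  next
    case False
    with j step witnessed obtain u where "{u, w} \<in> E" "col u = j"
      unfolding colours_witnessed_def by auto
    moreover have "u \<noteq> v"
      using j uncoloured \<open>col u = j\<close> by auto
    ultimately show ?thesis
      using step by auto
  qed
qed

lemma colours_witnessed_fold_ff_step: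
  assumes "distinct xs" "\<forall>x\<in>set xs. col x = 0" "colours_witnessed E col"
  shows "colours_witnessed E (fold (ff_step E) xs col)"
  using assms
proof (induction xs arbitrary: col)
  case (Cons x xs)
  have "\<forall>y\<in>set xs. ff_step E x col y = 0"
    using Cons.prems unfolding ff_step_def by auto
  with Cons show ?case
    by (simp add: colours_witnessed_ff_step)
qed simp

lemma colours_witnessed_ff_coloring: "distinct xs \<Longrightarrow> colours_witnessed E (ff_coloring E xs)"
  unfolding ff_coloring_def
  by (rule colours_witnessed_fold_ff_step) (auto simp: colours_witnessed_def)

lemma grundy_attained:
  obtains xs where "distinct xs" "set xs = {1..n}" "grundy n E = card (ff_coloring E xs ` set xs)"
proof -
  define G where "G = {card (ff_coloring E xs ` set xs) | xs. distinct xs \<and> set xs = {1..n}}"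
  have "G \<subseteq> {..n}"
  proof
    fix g assume "g \<in> G"
    then obtain xs where "set xs = {1..n}" "g = card (ff_coloring E xs ` set xs)"
      unfolding G_def by blast
    then show "g \<in> {..n}"
      using card_image_le[of "set xs" "ff_coloring E xs"] by simp
  qed
  then have "finite G"
    by (rule finite_subset) simp
  moreover have "G \<noteq> {}"
  proof -
    have "distinct [1..<n+1]" "set [1..<n+1] = {1..n}"
      by auto
    then show ?thesis
      unfolding G_def by blast
  qed
  ultimately have "grundy n E \<in> G"
    unfolding grundy_def G_def[symmetric] by (rule Max_in)
  with that show ?thesis
    unfolding G_def by blast
qed

lemma grundy_ge_imp_high_colour:
  assumes "grundy n E \<ge> k + 1"
  obtains col v where "colours_witnessed E col" "col v \<ge> k"
proof -
  obtain xs where xs: "distinct xs" "grundy n E = card (ff_coloring E xs ` set xs)"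
    using grundy_attained by metis
  have "\<exists>v. ff_coloring E xs v \<ge> k"
  proof (rule ccontr)
    assume "\<nexists>v. ff_coloring E xs v \<ge> k"
    then have "ff_coloring E xs ` set xs \<subseteq> {..<k}"
      by (auto simp: not_le)
    then have "card (ff_coloring E xs ` set xs) \<le> k"
      using card_mono[of "{..<k}"] by fastforce
    with assms xs(2) show False by simp
  qed
  with that colours_witnessed_ff_coloring[OF xs(1)] show ?thesis by blast
qed

lemma colours_witnessed_neighbours:
  assumes witnessed: "colours_witnessed E col" and "k < col w"
    and finite_nbhd: "finite {a. {w, a} \<in> E}"
  obtains A where "card A = k" "\<forall>a\<in>A. {w, a} \<in> E \<and> 1 \<le> col a \<and> col a \<le> k"
proof -
  define N where "N = {a. {w, a} \<in> E \<and> 1 \<le> col a \<and> col a \<le> k}"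
  have "finite N"
    using finite_nbhd unfolding N_def by (rule finite_subset[rotated]) auto
  have "{1..k} \<subseteq> col ` N"
  proof
    fix j assume "j \<in> {1..k}"
    then have "1 \<le> j \<and> j < col w"
      using \<open>k < col w\<close> by auto
    with witnessed obtain a where "{a, w} \<in> E" "col a = j"
      unfolding colours_witnessed_def by blast
    with \<open>j \<in> {1..k}\<close> show "j \<in> col ` N"
      unfolding N_def by (auto simp: insert_commute)
  qed
  then have "card {1..k} \<le> card (col ` N)"
    using \<open>finite N\<close> by (intro card_mono) auto
  also have "\<dots> \<le> card N"
    using \<open>finite N\<close> by (rule card_image_le)
  finally have "k \<le> card N"
    by simp
  then obtain A where "A \<subseteq> N" "card A = k"
    by (meson obtain_subset_with_card_n)
  with that show ?thesis
    unfolding N_def by blast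
qed

definition double_star :: "nat \<Rightarrow> nat \<Rightarrow> nat set \<Rightarrow> nat set \<Rightarrow> nat set set" where
  "double_star u v A B = insert {u, v} ((\<lambda>a. {u, a}) ` A \<union> (\<lambda>b. {v, b}) ` B)"

lemma colours_witnessed_double_star:
  assumes witnessed: "colours_witnessed E col" and uv: "{u, v} \<in> E"
    and "d < col u" "d < col v"
    and loopfree: "\<And>w. {w} \<notin> E" and finite_nbhd: "\<And>w. finite {a. {w, a} \<in> E}"
  obtains A B where "card A = d" "card B = d" "A \<inter> {u, v} = {}" "B \<inter> {u, v} = {}"
    "double_star u v A B \<subseteq> E"
proof -
  obtain A where A: "card A = d" "\<forall>a\<in>A. {u, a} \<in> E \<and> 1 \<le> col a \<and> col a \<le> d"
    using colours_witnessed_neighbours[OF witnessed \<open>d < col u\<close> finite_nbhd] by blast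
  obtain B where B: "card B = d" "\<forall>b\<in>B. {v, b} \<in> E \<and> 1 \<le> col b \<and> col b \<le> d"
    using colours_witnessed_neighbours[OF witnessed \<open>d < col v\<close> finite_nbhd] by blast
  have "A \<inter> {u, v} = {}"
    using A(2) loopfree[of u] \<open>d < col v\<close> by fastforce
  moreover have "B \<inter> {u, v} = {}"
    using B(2) loopfree[of v] \<open>d < col u\<close> by fastforce
  moreover have "double_star u v A B \<subseteq> E"
    unfolding double_star_def using uv A(2) B(2) by blast
  ultimately show ?thesis
    using that A(1) B(1) by blast
qed

lemma grundy_ge_imp_double_star:
  assumes E: "E \<subseteq> all_pairs n" and grundy: "grundy n E \<ge> d + 3"
  obtains u v A B where "u \<noteq> v" "u \<in> {1..n}" "v \<in> {1..n}"
    "A \<subseteq> {1..n}" "card A = d" "B \<subseteq> {1..n}" "card B = d"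
    "A \<inter> {u, v} = {}" "B \<inter> {u, v} = {}" "double_star u v A B \<subseteq> E"
proof -
  have edge: "x \<noteq> y \<and> x \<in> {1..n} \<and> y \<in> {1..n}" if "{x, y} \<in> E" for x y
    using that E doubleton_in_all_pairs_iff by blast
  have loopfree: "{w} \<notin> E" for w
    using edge[of w w] by auto
  have finite_nbhd: "finite {a. {w, a} \<in> E}" for w
    by (rule finite_subset[of _ "{1..n}"]) (use edge in auto)
  from grundy have "grundy n E \<ge> (d + 2) + 1"
    by simp
  then obtain col v where witnessed: "colours_witnessed E col" and v: "col v \<ge> d + 2"
    by (rule grundy_ge_imp_high_colour)
  moreover have "1 \<le> col v - 1 \<and> col v - 1 < col v"
    using v by auto
  ultimately obtain u where uv: "{u, v} \<in> E" and u: "col u = col v - 1"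
    unfolding colours_witnessed_def by blast
  have "d < col u" "d < col v"
    using u v by auto
  then obtain A B where AB: "card A = d" "card B = d" "A \<inter> {u, v} = {}" "B \<inter> {u, v} = {}"
    and star: "double_star u v A B \<subseteq> E"
    using colours_witnessed_double_star[OF witnessed uv _ _ loopfree finite_nbhd] by metis
  moreover have "A \<subseteq> {1..n}" "B \<subseteq> {1..n}"
    using star edge unfolding double_star_def by blast+
  moreover have "u \<noteq> v" "u \<in> {1..n}" "v \<in> {1..n}"
    using edge[OF uv] by auto
  ultimately show ?thesis
    using that by blast
qed

lemma card_double_star:
  assumes "u \<noteq> v" "A \<inter> {u, v} = {}" "B \<inter> {u, v} = {}" "finite A" "finite B"
  shows "card (double_star u v A B) = card A + card B + 1"
proof -
  have "inj_on (\<lambda>a. {u, a}) A" "inj_on (\<lambda>b. {v, b}) B"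
    by (auto simp: inj_on_def doubleton_eq_iff)
  moreover have "(\<lambda>a. {u, a}) ` A \<inter> (\<lambda>b. {v, b}) ` B = {}"
    using assms by (auto simp: doubleton_eq_iff)
  ultimately have "card ((\<lambda>a. {u, a}) ` A \<union> (\<lambda>b. {v, b}) ` B) = card A + card B"
    using assms by (simp add: card_Un_disjoint card_image)
  moreover have "{u, v} \<notin> (\<lambda>a. {u, a}) ` A \<union> (\<lambda>b. {v, b}) ` B"
    using assms by (auto simp: doubleton_eq_iff)
  ultimately show ?thesis
    unfolding double_star_def using assms by simp
qed

lemma double_star_subset_all_pairs:
  assumes "u \<noteq> v" "u \<in> {1..n}" "v \<in> {1..n}" "A \<subseteq> {1..n}" "B \<subseteq> {1..n}"
    "A \<inter> {u, v} = {}" "B \<inter> {u, v} = {}"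
  shows "double_star u v A B \<subseteq> all_pairs n"
  unfolding double_star_def using assms by (auto simp: doubleton_in_all_pairs_iff)

lemma prob_Gnp_grundy_ge:
  assumes p: "0 \<le> p" "p \<le> 1"
  shows "prob_Gnp n p (\<lambda>E. grundy n E \<ge> d + 3)
    \<le> real n ^ 2 * real (n choose d) ^ 2 * p ^ (2 * d + 1)"
proof -
  define C where "C = {A. A \<subseteq> {1..n} \<and> card A = d}"
  define I where "I = {(u, v, A, B) \<in> {1..n} \<times> {1..n} \<times> C \<times> C.
    u \<noteq> v \<and> A \<inter> {u, v} = {} \<and> B \<inter> {u, v} = {}}"
  define P where "P = (\<lambda>(u, v, A, B) E. double_star u v A B \<subseteq> E)"
  have C: "finite C" "card C = n choose d"
    unfolding C_def using n_subsets[of "{1..n}" d] by auto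
  have I: "I \<subseteq> {1..n} \<times> {1..n} \<times> C \<times> C"
    unfolding I_def by auto
  then have "finite I"
    using C by (auto intro: finite_subset)
  have "card I \<le> n * n * (n choose d) * (n choose d)"
    using card_mono[OF _ I] C by (simp add: card_cartesian_product)
  then have "real (card I) \<le> real (n * n * (n choose d) * (n choose d))"
    by (simp only: of_nat_le_iff)
  then have card_I: "real (card I) \<le> real n ^ 2 * real (n choose d) ^ 2"
    by (simp add: power2_eq_square)
  have "prob_Gnp n p (\<lambda>E. grundy n E \<ge> d + 3) \<le> prob_Gnp n p (\<lambda>E. \<exists>i\<in>I. P i E)"
  proof (rule prob_Gnp_mono[OF p])
    fix E assume "E \<subseteq> all_pairs n" "grundy n E \<ge> d + 3"
    then obtain u v A B where "u \<noteq> v" "u \<in> {1..n}" "v \<in> {1..n}"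
      "A \<subseteq> {1..n}" "card A = d" "B \<subseteq> {1..n}" "card B = d"
      "A \<inter> {u, v} = {}" "B \<inter> {u, v} = {}" "double_star u v A B \<subseteq> E"
      by (rule grundy_ge_imp_double_star)
    then have "(u, v, A, B) \<in> I" "P (u, v, A, B) E"
      unfolding I_def C_def P_def by auto
    then show "\<exists>i\<in>I. P i E" ..
  qed
  also have "\<dots> \<le> (\<Sum>i\<in>I. prob_Gnp n p (P i))"
    using p \<open>finite I\<close> by (rule prob_Gnp_union_bound)
  also have "\<dots> = (\<Sum>i\<in>I. p ^ (2 * d + 1))"
  proof (rule sum.cong)
    fix i assume "i \<in> I"
    then obtain u v A B where i: "i = (u, v, A, B)" "u \<noteq> v" "u \<in> {1..n}" "v \<in> {1..n}"
      "A \<subseteq> {1..n}" "card A = d" "B \<subseteq> {1..n}" "card B = d"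
      "A \<inter> {u, v} = {}" "B \<inter> {u, v} = {}"
      unfolding I_def C_def by auto
    then have "card (double_star u v A B) = 2 * d + 1"
      by (subst card_double_star) (auto intro: finite_subset)
    with i show "prob_Gnp n p (P i) = p ^ (2 * d + 1)"
      unfolding P_def by (simp add: prob_Gnp_superset double_star_subset_all_pairs)
  qed simp
  also have "\<dots> \<le> real n ^ 2 * real (n choose d) ^ 2 * p ^ (2 * d + 1)"
    using card_I p by (simp add: mult_right_mono)
  finally show ?thesis .
qed

lemma binomial_le_power_div_fact: "real (n choose k) \<le> real n ^ k / fact k"
proof (cases "k \<le> n")
  case True
  have "fact k * fact (n - k) * (n choose k) = fact n"
    by (rule binomial_fact_lemma[OF True])
  then have "fact n div fact (n - k) = fact k * (n choose k)"
    by (metis fact_nonzero nonzero_mult_div_cancel_right mult.commute mult.assoc)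
  then have "fact k * (n choose k) \<le> n ^ k"
    using fact_div_fact_le_pow[OF True] by simp
  then have "real (fact k * (n choose k)) \<le> real (n ^ k)"
    by linarith
  then have "fact k * real (n choose k) \<le> real n ^ k"
    by simp
  then show ?thesis
    by (simp add: field_simps)
qed (simp add: binomial_eq_0)

lemma power_div_fact_le_exp:
  fixes x :: real
  assumes "0 \<le> x"
  shows "x ^ k / fact k \<le> exp x"
proof -
  have "(\<lambda>k. x ^ k / fact k) sums exp x"
    using exp_converges[of x] by (simp add: divide_inverse mult.commute scaleR_conv_of_real)
  then show ?thesis
    using sum_le_suminf[of "\<lambda>k. x ^ k / fact k" "{k}"] assms by (simp add: sums_iff)
qed

lemma prob_Gnp_grundy_ge_sparse:
  fixes c :: real
  assumes "c > 0" "c \<le> real n" "d > 0"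
  shows "prob_Gnp n (c / real n) (\<lambda>E. grundy n E \<ge> d + 3)
    \<le> real n * c * (c * exp 1 / real d) ^ (2 * d)"
proof -
  have n: "real n > 0"
    using assms by linarith
  have "prob_Gnp n (c / real n) (\<lambda>E. grundy n E \<ge> d + 3)
      \<le> real n ^ 2 * real (n choose d) ^ 2 * (c / real n) ^ (2 * d + 1)"
    using assms n by (intro prob_Gnp_grundy_ge) auto
  also have "\<dots> \<le> real n ^ 2 * (real n ^ d / fact d) ^ 2 * (c / real n) ^ (2 * d + 1)"
    using assms by (intro mult_right_mono mult_left_mono power_mono binomial_le_power_div_fact) auto
  also have "\<dots> = real n * c * (c ^ d / fact d) ^ 2"
    using n by (simp add: field_simps power_mult_distrib power_add power_mult[symmetric] power2_eq_square)
      (simp add: mult_2_right power_add)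
  also have "\<dots> \<le> real n * c * ((c * exp 1 / real d) ^ d) ^ 2"
  proof -
    have "real d ^ d / fact d \<le> exp 1 ^ d"
      using power_div_fact_le_exp[of "real d" d] exp_of_nat_mult[of d "1 :: real"] by simp
    then have "c ^ d / fact d \<le> (c * exp 1 / real d) ^ d"
      using assms by (simp add: field_simps power_mult_distrib)
    then show ?thesis
      using assms n by (intro mult_left_mono power_mono) auto
  qed
  also have "\<dots> = real n * c * (c * exp 1 / real d) ^ (2 * d)"
    by (simp add: power_mult[symmetric] mult.commute)
  finally show ?thesis .
qed

lemma prob_Gnp_grundy_le_sparse:
  fixes c x :: real
  assumes "c > 0" "c \<le> real n" "c * exp 1 \<le> x"
  shows "1 - real n * c * (c * exp 1 / x) powr (2 * x)
    \<le> prob_Gnp n (c / real n) (\<lambda>E. real (grundy n E) \<le> x + 3)"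
proof -
  define d where "d = nat \<lceil>x\<rceil>"
  define q where "q = c * exp 1 / x"
  have "c * exp 1 > 0"
    using assms by simp
  then have "x > 0"
    using assms by linarith
  then have d: "x \<le> real d" "real d \<le> x + 1" "d > 0"
    unfolding d_def by linarith+
  have q: "0 < q" "q \<le> 1"
    unfolding q_def using assms \<open>x > 0\<close> by auto
  have p: "0 \<le> c / real n" "c / real n \<le> 1"
    using assms by auto
  have "(c * exp 1 / real d) ^ (2 * d) \<le> q ^ (2 * d)"
    unfolding q_def using assms d \<open>x > 0\<close> by (intro power_mono divide_left_mono) auto
  also have "\<dots> = q powr (2 * real d)"
    using q powr_realpow[of q "2 * d"] by simp
  also have "\<dots> \<le> q powr (2 * x)"
    using q d by (intro powr_mono') auto
  finally have "real n * c * (c * exp 1 / real d) ^ (2 * d) \<le> real n * c * q powr (2 * x)"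
    using assms by (intro mult_left_mono) auto
  with prob_Gnp_grundy_ge_sparse[OF assms(1,2) \<open>d > 0\<close>]
  have "prob_Gnp n (c / real n) (\<lambda>E. grundy n E \<ge> d + 3) \<le> real n * c * q powr (2 * x)"
    by linarith
  moreover have "prob_Gnp n (c / real n) (\<lambda>E. \<not> grundy n E \<ge> d + 3)
      \<le> prob_Gnp n (c / real n) (\<lambda>E. real (grundy n E) \<le> x + 3)"
    using d by (intro prob_Gnp_mono[OF p]) linarith
  ultimately show ?thesis
    unfolding q_def prob_Gnp_compl by linarith
qed

theorem corollary2:
  fixes c :: real
  assumes "c > 0"
  shows "\<exists>\<epsilon> :: nat \<Rightarrow> real. \<epsilon> \<longlonglongrightarrow> 0 \<and>
    (\<lambda>n. prob_Gnp n (c / real n)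
       (\<lambda>E. real (grundy n E) \<le> (1/2 + \<epsilon> n) * ln (real n) / ln (ln (real n)))) \<longlonglongrightarrow> 1"
proof -
  define x where "x n = (1/2 + ln (ln (real n)) powr (-1/2)) * ln (real n) / ln (ln (real n))"
    for n :: nat
  define \<epsilon> where "\<epsilon> n = ln (ln (real n)) powr (-1/2) + 3 * ln (ln (real n)) / ln (real n)"
    for n :: nat
  define b where "b n = real n * c * (c * exp 1 / x n) powr (2 * x n)" for n :: nat
  define P where "P n = prob_Gnp n (c / real n)
    (\<lambda>E. real (grundy n E) \<le> (1/2 + \<epsilon> n) * ln (real n) / ln (ln (real n)))" for n :: nat
  have "\<epsilon> \<longlonglongrightarrow> 0"
    unfolding \<epsilon>_def by real_asymp
  have "b \<longlonglongrightarrow> 0"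
    unfolding b_def x_def using assms by real_asymp
  have "eventually (\<lambda>n. c * exp 1 \<le> x n) sequentially"
    unfolding x_def by real_asymp
  moreover have
    "eventually (\<lambda>n. 1 < ln (real n) \<and> 0 < ln (ln (real n)) \<and> c \<le> real n) sequentially"
    by (intro eventually_conj) real_asymp+
  ultimately have "eventually (\<lambda>n. 1 - b n \<le> P n \<and> P n \<le> 1) sequentially"
  proof eventually_elim
    case (elim n)
    then have "(1/2 + \<epsilon> n) * ln (real n) / ln (ln (real n)) = x n + 3"
      unfolding \<epsilon>_def x_def by (simp add: field_simps)
    then show ?case
      unfolding P_def b_def using elim assms
      by (simp add: prob_Gnp_grundy_le_sparse prob_Gnp_le_1)
  qed
  then have "P \<longlonglongrightarrow> 1"
    using tendsto_diff[OF tendsto_const \<open>b \<longlonglongrightarrow> 0\<close>, of 1]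
    by (intro tendsto_sandwich[of "\<lambda>n. 1 - b n" P sequentially "\<lambda>_. 1"])
      (simp_all add: eventually_conj_iff)
  with \<open>\<epsilon> \<longlonglongrightarrow> 0\<close> show ?thesis
    unfolding P_def by blast
qed

end
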